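(* Let $g\in C^0([0,\infty),H)$ and let $u$ be the weak solution on $[0,\infty)$ of $u''+2\delta u'+Au=g$ with data in $D(A^{1/2})\times H$. Define $$E(t)=|u'(t)|^2+|A^{1/2}u(t)|^2,\qquad \widehat E(t)=E(t)+2\mu\langle u'(t),Qu(t)\rangle,$$ and, for $d\ge0$ and $u(t)\ne0$, $$G_d(t)=\frac{E(t)}{|u(t)|^{2+d}},\qquad \widehat G_d(t)=\frac{\widehat E(t)}{|u(t)|^{2+d}}.$$ Then: (1) $\tfrac12E(t)\le\widehat E(t)\le 2E(t)$ for all $t\ge0$. Moreover, $\widehat E$ is of class $C^1$ on $[0,\infty)$ and $$\widehat E'(t)\le-\frac{\mu}{2}\widehat E(t)+\frac{2}{\delta}|g(t)|^2\quad\text{for all } t\ge0.$$ (2) Suppose $u(t)\ne0$ for all $t$ in an interval $(a,b)$, and let $d\ge0$. Then $\tfrac12G_d(t)\le\widehat G_d(t)\le2G_d(t)$ on $(a,b)$. Moreover, $\widehat G_d$ is of class $C^1$ on $(a,b)$ and $$\widehat G_d'(t)\le-\frac{\mu}{2}\widehat G_d(t)+\frac{2}{\delta}\frac{|g(t)|^2}{|u(t)|^{2+d}}+(2+d)|u(t)|^{d/2}[G_d(t)]^{1/2}\widehat G_d(t)\quad\text{for all } t\in(a,b).$$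
   Context: $H$ is a separable real Hilbert space with norm $|\cdot|$ and scalar product $\langle\cdot,\cdot\rangle$. $A$ is a self-adjoint nonnegative operator with dense domain, and $\delta>0$. Weak solutions of $u''+2\delta u'+Au=g$ lie in $C^0([0,\infty),D(A^{1/2}))\cap C^1([0,\infty),H)$. Their energy $E$ is $C^1$ with $E'=-4\delta|u'|^2+2\langle u',g\rangle$. $Q:H\to H$ denotes the orthogonal projection onto $\ker(A)^\perp$. The constant $\nu>0$ is such that $|Qu|^2\le\nu^{-1}|A^{1/2}u|^2$ for all $u\in D(A^{1/2})$. Under the spectral assumption that $\sigma(A)$ is a discrete set of eigenvalues without finite accumulation points, one can take $\nu$ to be the smallest positive eigenvalue of $A$, or any $\nu>0$ if $A=0$. The constant $\mu$ is $\mu:=\min\{\tfrac12,\tfrac{\nu}{2},\tfrac{\delta}{2},\tfrac{\nu}{5\delta}\}$. *)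

theory Defs
  imports "HOL-Analysis.Analysis"
begin

text \<open>An (unbounded) operator is represented by a domain D and a map A (only meaningful on D).
  Self-adjoint nonnegative operator with dense domain.\<close>
definition selfadj_nonneg :: "'a::{real_inner,complete_space} set \<Rightarrow> ('a \<Rightarrow> 'a) \<Rightarrow> bool" where
  "selfadj_nonneg D A \<longleftrightarrow>
     subspace D \<and> closure D = UNIV \<and>
     (\<forall>x\<in>D. \<forall>y\<in>D. \<forall>c::real. A (x + y) = A x + A y \<and> A (c *\<^sub>R x) = c *\<^sub>R A x) \<and>
     (\<forall>x\<in>D. \<forall>y\<in>D. inner (A x) y = inner x (A y)) \<and>
     (\<forall>x\<in>D. inner (A x) x \<ge> 0) \<and>
     (\<forall>y z. (\<forall>x\<in>D. inner (A x) y = inner x z) \<longrightarrow> y \<in> D \<and> A y = z)"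

definition is_sqrt_op :: "'a::{real_inner,complete_space} set \<Rightarrow> ('a \<Rightarrow> 'a) \<Rightarrow> 'a set \<Rightarrow> ('a \<Rightarrow> 'a) \<Rightarrow> bool" where
  "is_sqrt_op DB B DA A \<longleftrightarrow> selfadj_nonneg DB B \<and> DA = {x \<in> DB. B x \<in> DB} \<and> (\<forall>x\<in>DA. A x = B (B x))"

definition is_orth_proj :: "'a::real_inner set \<Rightarrow> ('a \<Rightarrow> 'a) \<Rightarrow> bool" where
  "is_orth_proj M Q \<longleftrightarrow> (\<forall>x. Q x \<in> M \<and> (\<forall>y\<in>M. inner (x - Q x) y = 0))"

text \<open>Weak solution on [0,\<infinity>) of u'' + 2 delta u' + A u = g, with A = B^2, B = A^(1/2),
  and u' the time derivative of u:  u \<in> C^0([0,\<infinity>),D(A^(1/2))) \<inter> C^1([0,\<infinity>),H),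
  and for every v \<in> D(A^(1/2)):  d/dt <u',v> + 2 delta <u',v> + <B u, B v> = <g,v>.\<close>
definition weak_solution ::
  "'a::{real_inner,complete_space} set \<Rightarrow> ('a \<Rightarrow> 'a) \<Rightarrow> real \<Rightarrow> (real \<Rightarrow> 'a) \<Rightarrow> (real \<Rightarrow> 'a) \<Rightarrow> (real \<Rightarrow> 'a) \<Rightarrow> bool" where
  "weak_solution DB B \<delta> g u u' \<longleftrightarrow>
     (\<forall>t\<ge>0. u t \<in> DB) \<and>
     continuous_on {0..} u \<and> continuous_on {0..} (\<lambda>t. B (u t)) \<and>
     (\<forall>t\<ge>0. (u has_vector_derivative u' t) (at t within {0..})) \<and>
     continuous_on {0..} u' \<and>
     (\<forall>v\<in>DB. \<forall>t\<ge>0.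
        ((\<lambda>s. inner (u' s) v) has_real_derivative
           (inner (g t) v - 2 * \<delta> * inner (u' t) v - inner (B (u t)) (B v))) (at t within {0..}))"

end

theory Submission
  imports Defs
begin

text \<open>The cross term \<open>2\<mu>\<langle>u', Q u\<rangle>\<close> is at most \<open>\<mu>(|u'|\<^sup>2 + |Q u|\<^sup>2)\<close>, and
  \<open>|Q u|\<^sup>2 \<le> |B u|\<^sup>2/\<nu>\<close> with \<open>\<mu> \<le> min (1/2) (\<nu>/2)\<close> makes it at most \<open>E/2\<close>.
  Since \<open>u - Q u\<close> lies in \<open>ker A = ker B\<close> (\<open>B = A\<^bsup>1/2\<^esup>\<close>), the weak equation may be tested
  with \<open>Q u\<close>, and \<open>B (Q u) = B u\<close> gives
  \<open>d/dt \<langle>u', Q u\<rangle> = \<langle>g, Q u\<rangle> - 2\<delta>\<langle>u', Q u\<rangle> - |B u|\<^sup>2 + \<langle>u', Q u'\<rangle>\<close>.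
  Young's inequality and the remaining constraints on \<open>\<mu>\<close> then absorb every cross term in the
  derivative of the modified energy into \<open>-\<mu>/2\<close> times the modified energy.
  Dividing by \<open>|u|\<^bsup>2+d\<^esup>\<close> adds \<open>-(2+d)\<langle>u, u'\<rangle>/|u|\<^sup>2\<close> times the quotient, and
  \<open>|u'| \<le> E\<^bsup>1/2\<^esup> = |u|\<^bsup>1+d/2\<^esup> G\<^bsup>1/2\<^esup>\<close> bounds this coefficient.\<close>

lemma has_vector_derivative_imp_tendsto_quotient:
  assumes "(w has_vector_derivative w') (at t within S)"
  shows "((\<lambda>s. (w s - w t) /\<^sub>R (s - t)) \<longlongrightarrow> w') (at t within S)"
proof -
  have "((\<lambda>s. norm ((w s - w t) - (s - t) *\<^sub>R w') / norm (s - t)) \<longlongrightarrow> 0) (at t within S)"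
    using assms unfolding has_vector_derivative_def has_derivative_iff_norm by simp
  then have "((\<lambda>s. norm ((w s - w t) /\<^sub>R (s - t) - w')) \<longlongrightarrow> 0) (at t within S)"
  proof (rule Lim_transform_eventually)
    have "norm ((w s - w t) - (s - t) *\<^sub>R w') / norm (s - t) = norm ((w s - w t) /\<^sub>R (s - t) - w')"
      if "s \<noteq> t" for s
    proof -
      have "(w s - w t) /\<^sub>R (s - t) - w' = (1 / (s - t)) *\<^sub>R ((w s - w t) - (s - t) *\<^sub>R w')"
        using that by (simp add: scaleR_diff_right divide_inverse)
      then show ?thesis by (simp add: divide_inverse mult.commute)
    qed
    then show "\<forall>\<^sub>F s in at t within S. norm ((w s - w t) - (s - t) *\<^sub>R w') / norm (s - t)
                 = norm ((w s - w t) /\<^sub>R (s - t) - w')"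
      unfolding eventually_at_filter by (auto intro: always_eventually)
  qed
  then show ?thesis by (simp add: tendsto_norm_zero_iff LIM_zero_iff)
qed

text \<open>Product rule for \<open>\<langle>c, w\<rangle>\<close> when \<open>c\<close> is only weakly differentiable, i.e. only
  \<open>\<langle>c, w t\<rangle>\<close> with the frozen vector \<open>w t\<close> is known to be differentiable.\<close>
lemma has_real_derivative_inner_weak:
  fixes c w :: "real \<Rightarrow> 'a::real_inner"
  assumes w: "(w has_vector_derivative w') (at t within S)"
    and c: "(c \<longlongrightarrow> c t) (at t within S)"
    and cw: "((\<lambda>s. inner (c s) (w t)) has_real_derivative D) (at t within S)"
  shows "((\<lambda>s. inner (c s) (w s)) has_real_derivative D + inner (c t) w') (at t within S)"
proof -
  have "((\<lambda>s. (inner (c s) (w t) - inner (c t) (w t)) / (s - t) + inner (c s) ((w s - w t) /\<^sub>R (s - t)))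
         \<longlongrightarrow> D + inner (c t) w') (at t within S)"
    using cw tendsto_inner[OF c has_vector_derivative_imp_tendsto_quotient[OF w]]
    by (intro tendsto_add) (simp_all add: has_field_derivative_iff)
  moreover have "(inner (c s) (w t) - inner (c t) (w t)) / (s - t) + inner (c s) ((w s - w t) /\<^sub>R (s - t))
     = (inner (c s) (w s) - inner (c t) (w t)) / (s - t)" for s
    by (simp add: inner_diff_right diff_divide_distrib divide_inverse algebra_simps)
  ultimately show ?thesis by (simp add: has_field_derivative_iff)
qed

lemma is_orth_proj_unique:
  assumes "subspace M" "p \<in> M" "q \<in> M"
    and "\<forall>y\<in>M. inner (x - p) y = 0" "\<forall>y\<in>M. inner (x - q) y = 0"
  shows "p = q"
proof -
  have "p - q \<in> M" using assms by (simp add: subspace_diff)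
  then have "inner (x - q) (p - q) - inner (x - p) (p - q) = 0" using assms by simp
  then have "inner (p - q) (p - q) = 0" by (simp add: inner_diff_left)
  then show ?thesis by simp
qed

lemma norm_is_orth_proj_le:
  assumes "is_orth_proj M Q"
  shows "norm (Q x) \<le> norm x"
proof -
  have "orthogonal (Q x) (x - Q x)"
    using assms unfolding is_orth_proj_def orthogonal_def by (simp add: inner_commute)
  then have "(norm x)\<^sup>2 = (norm (Q x))\<^sup>2 + (norm (x - Q x))\<^sup>2"
    using norm_add_Pythagorean by fastforce
  then show ?thesis by (simp add: power2_le_imp_le)
qed

lemma bounded_linear_is_orth_proj:
  assumes M: "subspace M" and Q: "is_orth_proj M Q"
  shows "bounded_linear Q"
proof (rule bounded_linear_intro[where K = 1])
  have QM: "Q x \<in> M" and orth: "\<forall>y\<in>M. inner (x - Q x) y = 0" for x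
    using Q unfolding is_orth_proj_def by auto
  show "Q (x + y) = Q x + Q y" for x y
  proof (rule is_orth_proj_unique[OF M QM _ orth])
    show "Q x + Q y \<in> M" using M QM by (simp add: subspace_add)
    have "x + y - (Q x + Q y) = (x - Q x) + (y - Q y)" by simp
    then show "\<forall>z\<in>M. inner (x + y - (Q x + Q y)) z = 0"
      using orth[of x] orth[of y] by (simp only: inner_add_left) simp
  qed
  show "Q (r *\<^sub>R x) = r *\<^sub>R Q x" for r x
  proof (rule is_orth_proj_unique[OF M QM _ orth])
    show "r *\<^sub>R Q x \<in> M" using M QM by (simp add: subspace_scale)
    have "r *\<^sub>R x - r *\<^sub>R Q x = r *\<^sub>R (x - Q x)" by (simp add: scaleR_diff_right)
    then show "\<forall>z\<in>M. inner (r *\<^sub>R x - r *\<^sub>R Q x) z = 0" using orth[of x] by simp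
  qed
  show "norm (Q x) \<le> norm x * 1" for x using norm_is_orth_proj_le[OF Q] by simp
qed

lemma selfadj_nonneg_symmetric:
  assumes "selfadj_nonneg D A" "x \<in> D" "y \<in> D"
  shows "inner (A x) y = inner x (A y)"
proof -
  have "\<forall>x\<in>D. \<forall>y\<in>D. inner (A x) y = inner x (A y)"
    using assms(1) unfolding selfadj_nonneg_def by (elim conjE)
  then show ?thesis using assms(2,3) by simp
qed

lemma selfadj_nonneg_maximal:
  assumes "selfadj_nonneg D A" "\<forall>x\<in>D. inner (A x) y = inner x z"
  shows "y \<in> D \<and> A y = z"
proof -
  have "\<forall>y z. (\<forall>x\<in>D. inner (A x) y = inner x z) \<longrightarrow> y \<in> D \<and> A y = z"
    using assms(1) unfolding selfadj_nonneg_def by (elim conjE)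
  then show ?thesis using assms(2) by blast
qed

lemma selfadj_nonneg_diff:
  assumes "selfadj_nonneg D A" "x \<in> D" "y \<in> D"
  shows "x - y \<in> D" "A (x - y) = A x - A y"
proof -
  have "subspace D"
    using assms(1) unfolding selfadj_nonneg_def by (elim conjE)
  have lin: "\<forall>x\<in>D. \<forall>y\<in>D. \<forall>c::real. A (x + y) = A x + A y \<and> A (c *\<^sub>R x) = c *\<^sub>R A x"
    using assms(1) unfolding selfadj_nonneg_def by (elim conjE)
  show "x - y \<in> D" using \<open>subspace D\<close> assms(2,3) by (rule subspace_diff)
  have "A (x - y) + A y = A (x - y + y)" using lin[rule_format, OF \<open>x - y \<in> D\<close> assms(3)] by simp
  then show "A (x - y) = A x - A y" by (simp add: algebra_simps)
qed

lemma selfadj_nonneg_range_orthogonal_ker: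
  assumes "selfadj_nonneg D A" "y \<in> D"
  shows "A y \<in> orthogonal_comp {x \<in> D. A x = 0}"
  unfolding orthogonal_comp_def orthogonal_def
proof (intro CollectI ballI)
  fix k assume "k \<in> {x \<in> D. A x = 0}"
  then have "inner (A y) k = inner y (A k)" "A k = 0"
    using selfadj_nonneg_symmetric[OF assms(1,2)] by auto
  then show "inner k (A y) = 0" by (simp add: inner_commute)
qed

lemma is_sqrt_op_ker:
  assumes "is_sqrt_op DB B DA A" "z \<in> DA" "A z = 0"
  shows "z \<in> DB \<and> B z = 0"
proof -
  have sa: "selfadj_nonneg DB B" and z: "z \<in> DB" "B z \<in> DB" "B (B z) = 0"
    using assms unfolding is_sqrt_op_def by auto
  then have "inner (B z) (B z) = 0"
    using selfadj_nonneg_symmetric[OF sa z(2,1)] by simp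
  with z show ?thesis by simp
qed

lemma is_sqrt_op_orth_proj_ker:
  assumes A: "selfadj_nonneg DA A" and B: "is_sqrt_op DB B DA A"
    and Q: "is_orth_proj (orthogonal_comp {x \<in> DA. A x = 0}) Q" and x: "x \<in> DB"
  shows "Q x \<in> DB \<and> B (Q x) = B x"
proof -
  have "\<forall>y\<in>DA. inner (A y) (x - Q x) = inner y 0"
    using Q selfadj_nonneg_range_orthogonal_ker[OF A] unfolding is_orth_proj_def
    by (simp add: inner_commute)
  then have "x - Q x \<in> DB \<and> B (x - Q x) = 0"
    using is_sqrt_op_ker[OF B] selfadj_nonneg_maximal[OF A] by blast
  moreover have "selfadj_nonneg DB B" using B unfolding is_sqrt_op_def by simp
  ultimately show ?thesis
    using selfadj_nonneg_diff[of DB B x "x - Q x"] x by simp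
qed

lemma two_mult_le_weighted_squares:
  fixes a b e :: real
  assumes "e > 0"
  shows "2 * a * b \<le> e * a\<^sup>2 + b\<^sup>2 / e"
proof -
  have "0 \<le> (e * a - b)\<^sup>2 / e" using assms by simp
  also have "\<dots> = e * a\<^sup>2 + b\<^sup>2 / e - 2 * a * b"
    using assms by (simp add: power2_eq_square field_simps)
  finally show ?thesis by simp
qed

lemma modified_energy_equiv:
  fixes v q :: "'a::real_inner" and b \<mu> \<nu> :: real
  assumes "\<nu> > 0" "0 \<le> \<mu>" "\<mu> \<le> 1/2" "\<mu> \<le> \<nu>/2" "(norm q)\<^sup>2 \<le> b\<^sup>2 / \<nu>"
  shows "((norm v)\<^sup>2 + b\<^sup>2) / 2 \<le> (norm v)\<^sup>2 + b\<^sup>2 + 2 * \<mu> * inner v q"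
    and "(norm v)\<^sup>2 + b\<^sup>2 + 2 * \<mu> * inner v q \<le> 2 * ((norm v)\<^sup>2 + b\<^sup>2)"
proof -
  have "\<bar>2 * inner v q\<bar> \<le> 2 * (norm v * norm q)"
    using Cauchy_Schwarz_ineq2[of v q] by simp
  also have "\<dots> \<le> (norm v)\<^sup>2 + (norm q)\<^sup>2"
    using sum_squares_bound[of "norm v" "norm q"] by simp
  finally have "\<bar>2 * \<mu> * inner v q\<bar> \<le> \<mu> * (norm v)\<^sup>2 + \<mu> * (norm q)\<^sup>2"
    using \<open>0 \<le> \<mu>\<close> mult_left_mono by (fastforce simp: abs_mult distrib_left)
  moreover have "\<mu> * (norm q)\<^sup>2 \<le> b\<^sup>2 / 2"
  proof -
    have "\<mu> * (norm q)\<^sup>2 \<le> \<mu> * (b\<^sup>2 / \<nu>)" using assms by (intro mult_left_mono) auto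
    also have "\<dots> \<le> b\<^sup>2 / 2"
      using assms mult_right_mono[of "2 * \<mu>" \<nu> "b\<^sup>2"] by (simp add: field_simps)
    finally show ?thesis .
  qed
  moreover have "\<mu> * (norm v)\<^sup>2 \<le> (norm v)\<^sup>2 / 2"
    using assms mult_right_mono[of \<mu> "1/2" "(norm v)\<^sup>2"] by simp
  ultimately show "((norm v)\<^sup>2 + b\<^sup>2) / 2 \<le> (norm v)\<^sup>2 + b\<^sup>2 + 2 * \<mu> * inner v q"
    and "(norm v)\<^sup>2 + b\<^sup>2 + 2 * \<mu> * inner v q \<le> 2 * ((norm v)\<^sup>2 + b\<^sup>2)"
    by (auto simp: abs_le_iff)
qed

lemma modified_energy_dissipation:
  fixes v w q p :: "'a::real_inner" and b \<delta> \<nu> \<mu> :: real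
  assumes "\<delta> > 0" "\<nu> > 0" "\<mu> > 0" "\<mu> \<le> \<delta>/2" "\<mu> \<le> \<nu> / (5*\<delta>)"
    and "inner v p \<le> (norm v)\<^sup>2" "(norm q)\<^sup>2 \<le> b\<^sup>2 / \<nu>"
  shows "-4*\<delta>*(norm v)\<^sup>2 + 2*inner v w + 2*\<mu>*(inner v p + inner w q - 2*\<delta>*inner v q - b\<^sup>2)
      \<le> -(\<mu>/2)*((norm v)\<^sup>2 + b\<^sup>2 + 2*\<mu>*inner v q) + (2/\<delta>)*(norm w)\<^sup>2"
proof -
  define X W G where "X = norm v" and "W = norm q" and "G = norm w"
  have "X \<ge> 0" "W \<ge> 0" unfolding X_def W_def by simp_all
  have \<nu>W: "\<nu> * W\<^sup>2 \<le> b\<^sup>2" using assms(2,7) unfolding W_def by (simp add: field_simps)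
  have \<mu>\<delta>: "5 * (\<mu> * \<delta>) \<le> \<nu>" using assms(1,5) by (simp add: field_simps)
  have forcing: "2 * inner v w \<le> \<delta> * X\<^sup>2 + G\<^sup>2 / \<delta>"
    using norm_cauchy_schwarz[of v w] two_mult_le_weighted_squares[OF assms(1), of X G]
    unfolding X_def G_def by linarith
  have forcing_cross: "2 * \<mu> * inner w q \<le> \<mu> * b\<^sup>2 / 2 + G\<^sup>2 / \<delta>"
  proof -
    have "2 * \<mu> * inner w q \<le> \<mu> * (2 * W * G)"
      using norm_cauchy_schwarz[of w q] \<open>\<mu> > 0\<close> unfolding W_def G_def by (simp add: mult.commute)
    also have "\<dots> \<le> \<mu> * (\<nu> / 2 * W\<^sup>2 + G\<^sup>2 / (\<nu> / 2))"
      using two_mult_le_weighted_squares[of "\<nu>/2" W G] assms by (intro mult_left_mono) auto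
    also have "\<dots> = \<mu> * (\<nu> * W\<^sup>2) / 2 + (2 * \<mu> / \<nu>) * G\<^sup>2" by (simp add: field_simps)
    also have "\<dots> \<le> \<mu> * b\<^sup>2 / 2 + (1 / \<delta>) * G\<^sup>2"
    proof (intro add_mono mult_right_mono)
      show "\<mu> * (\<nu> * W\<^sup>2) / 2 \<le> \<mu> * b\<^sup>2 / 2" using \<nu>W \<open>\<mu> > 0\<close> by simp
      show "2 * \<mu> / \<nu> \<le> 1 / \<delta>" using \<mu>\<delta> assms(1,2,3) by (simp add: field_simps)
    qed simp
    finally show ?thesis by simp
  qed
  define k \<alpha> where "k = (4*\<delta> - \<mu>) * \<mu>" and "\<alpha> = 3*\<delta> - 5*\<mu>/2"
  have "\<alpha> > 0" using assms unfolding \<alpha>_def by simp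
  have "0 \<le> k" "k \<le> 4*\<delta>*\<mu>" using assms unfolding k_def by auto
  have damping_cross: "- k * inner v q \<le> \<alpha> * X\<^sup>2 + \<mu> * b\<^sup>2"
  proof -
    have "k\<^sup>2 / (4*\<alpha>) \<le> \<mu> * \<nu>"
    proof -
      have "k\<^sup>2 \<le> 16 * \<delta> * \<mu> * (\<mu> * \<delta>)"
        using \<open>0 \<le> k\<close> \<open>k \<le> 4*\<delta>*\<mu>\<close> power_mono[of k "4*\<delta>*\<mu>" 2] by (simp add: power2_eq_square mult_ac)
      also have "\<dots> \<le> 16 * \<delta> * \<mu> * (\<nu> / 5)"
        using \<mu>\<delta> assms by (intro mult_left_mono) auto
      also have "\<dots> \<le> 4 * \<alpha> * (\<mu> * \<nu>)"
        using assms unfolding \<alpha>_def by (simp add: mult_right_mono)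
      finally show ?thesis using \<open>\<alpha> > 0\<close> by (simp add: field_simps)
    qed
    have "- k * inner v q \<le> 2 * X * (k * W / 2)"
      using Cauchy_Schwarz_ineq2[of v q] \<open>0 \<le> k\<close> mult_left_mono[of "- inner v q" "X * W" k]
      unfolding X_def W_def by (simp add: abs_le_iff mult_ac)
    also have "\<dots> \<le> \<alpha> * X\<^sup>2 + k\<^sup>2 / (4*\<alpha>) * W\<^sup>2"
      using two_mult_le_weighted_squares[OF \<open>\<alpha> > 0\<close>, of X "k * W / 2"]
      by (simp add: power2_eq_square field_simps)
    also have "\<dots> \<le> \<alpha> * X\<^sup>2 + \<mu> * b\<^sup>2"
      using mult_right_mono[OF \<open>k\<^sup>2 / (4*\<alpha>) \<le> \<mu> * \<nu>\<close>, of "W\<^sup>2"]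
        mult_left_mono[OF \<nu>W less_imp_le[OF \<open>\<mu> > 0\<close>]] by (simp add: mult.assoc)
    finally show ?thesis .
  qed
  have dissipation: "2 * \<mu> * inner v p \<le> 2 * \<mu> * X\<^sup>2"
    using assms(3,6) unfolding X_def by simp
  \<comment> \<open>\<open>\<alpha>\<close> is chosen so that the coefficients of \<open>X\<^sup>2\<close> and \<open>b\<^sup>2\<close> cancel exactly\<close>
  with forcing forcing_cross damping_cross show ?thesis
    unfolding X_def[symmetric] G_def[symmetric] k_def \<alpha>_def
    by (simp add: algebra_simps)
qed

lemma modified_energy_has_derivative:
  assumes weak: "weak_solution DB B \<delta> g u u'"
    and energy: "((\<lambda>s. (norm (u' s))\<^sup>2 + (norm (B (u s)))\<^sup>2) has_real_derivative E') (at t within {0..})"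
    and Q: "bounded_linear Q" "\<forall>x\<in>DB. Q x \<in> DB \<and> B (Q x) = B x"
    and t: "t \<ge> 0"
  shows "((\<lambda>s. (norm (u' s))\<^sup>2 + (norm (B (u s)))\<^sup>2 + 2 * \<mu> * inner (u' s) (Q (u s)))
      has_real_derivative E' + 2 * \<mu> * (inner (u' t) (Q (u' t)) + inner (g t) (Q (u t))
        - 2 * \<delta> * inner (u' t) (Q (u t)) - (norm (B (u t)))\<^sup>2)) (at t within {0..})"
proof -
  have uDB: "Q (u t) \<in> DB" "B (Q (u t)) = B (u t)"
    using weak Q(2) t unfolding weak_solution_def by auto
  have du: "(u has_vector_derivative u' t) (at t within {0..})"
    and cu': "(u' \<longlongrightarrow> u' t) (at t within {0..})"
    using weak t unfolding weak_solution_def continuous_on_def by auto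
  have "\<forall>v\<in>DB. \<forall>t\<ge>0. ((\<lambda>s. inner (u' s) v) has_real_derivative
      inner (g t) v - 2 * \<delta> * inner (u' t) v - inner (B (u t)) (B v)) (at t within {0..})"
    using weak unfolding weak_solution_def by (elim conjE)
  from this[rule_format, OF uDB(1) t]
  have "((\<lambda>s. inner (u' s) (Q (u t))) has_real_derivative inner (g t) (Q (u t))
      - 2 * \<delta> * inner (u' t) (Q (u t)) - (norm (B (u t)))\<^sup>2) (at t within {0..})"
    unfolding uDB(2) by (simp add: power2_norm_eq_inner)
  from has_real_derivative_inner_weak[OF bounded_linear.has_vector_derivative[OF Q(1) du] cu' this]
  have "((\<lambda>s. inner (u' s) (Q (u s))) has_real_derivative inner (g t) (Q (u t))
      - 2 * \<delta> * inner (u' t) (Q (u t)) - (norm (B (u t)))\<^sup>2 + inner (u' t) (Q (u' t))) (at t within {0..})" .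
  from DERIV_add[OF energy DERIV_cmult[OF this, of "2 * \<mu>"]] show ?thesis
    by (simp add: algebra_simps)
qed

lemma has_real_derivative_divide_norm_powr:
  fixes u :: "real \<Rightarrow> 'a::real_inner"
  assumes f: "(f has_real_derivative f') (at t)" and u: "(u has_vector_derivative u') (at t)"
    and nz: "u t \<noteq> 0"
  shows "((\<lambda>s. f s / norm (u s) powr p) has_real_derivative
           f' / norm (u t) powr p - p * inner (u t) u' / (norm (u t))\<^sup>2 * (f t / norm (u t) powr p)) (at t)"
proof -
  define N where "N = norm (u t)"
  have "N > 0" using nz unfolding N_def by simp
  have "((\<lambda>s. norm (u s)) has_derivative (*) (inner (u t) u' / N)) (at t)"
    using has_derivative_compose[OF u[unfolded has_vector_derivative_def] has_derivative_norm[OF nz]]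
    unfolding N_def
    by (rule has_derivative_eq_rhs) (simp add: fun_eq_iff sgn_div_norm inner_commute field_simps)
  then have "((\<lambda>s. norm (u s)) has_real_derivative inner (u t) u' / N) (at t)"
    by (simp add: has_field_derivative_def)
  from DERIV_fun_powr[OF this, of p] have "((\<lambda>s. norm (u s) powr p) has_real_derivative
      p * N powr (p - 1) * (inner (u t) u' / N)) (at t)"
    using \<open>N > 0\<close> unfolding N_def by simp
  from DERIV_divide[OF f this] have "((\<lambda>s. f s / norm (u s) powr p) has_real_derivative
      (f' * N powr p - f t * (p * N powr (p - 1) * (inner (u t) u' / N))) / (N powr p * N powr p)) (at t)"
    using \<open>N > 0\<close> unfolding N_def by simp
  moreover have "(f' * N powr p - f t * (p * N powr (p - 1) * (inner (u t) u' / N))) / (N powr p * N powr p)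
      = f' / N powr p - p * inner (u t) u' / N\<^sup>2 * (f t / N powr p)"
    using \<open>N > 0\<close> by (simp add: powr_diff power2_eq_square field_simps)
  ultimately show ?thesis unfolding N_def by simp
qed

lemma rescaled_derivative_le:
  fixes x y :: "'a::real_inner" and d F F' R E \<mu> :: real
  assumes "x \<noteq> 0" "d \<ge> 0" "F \<ge> 0" "F' \<le> -(\<mu>/2) * F + R" "(norm y)\<^sup>2 \<le> E"
  shows "F' / norm x powr (2+d) - (2+d) * inner x y / (norm x)\<^sup>2 * (F / norm x powr (2+d))
    \<le> -(\<mu>/2) * (F / norm x powr (2+d)) + R / norm x powr (2+d)
       + (2+d) * norm x powr (d/2) * sqrt (E / norm x powr (2+d)) * (F / norm x powr (2+d))"
proof -
  define N K G where "N = norm x" and "K = N powr (2+d)" and "G = F / K"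
  have "N > 0" "K > 0" using assms(1) unfolding N_def K_def by simp_all
  have "G \<ge> 0" using \<open>F \<ge> 0\<close> \<open>K > 0\<close> unfolding G_def by simp
  have forced: "F' / K \<le> -(\<mu>/2) * G + R / K"
    using divide_right_mono[OF assms(4), of K] \<open>K > 0\<close> unfolding G_def by (simp add: field_simps)
  have "sqrt K = N powr ((2+d)/2)"
    using \<open>N > 0\<close> unfolding K_def by (simp add: powr_half_sqrt[symmetric] powr_powr)
  also have "\<dots> = N * N powr (d/2)"
    using \<open>N > 0\<close> by (simp add: add_divide_distrib powr_add)
  finally have "sqrt K = N * N powr (d/2)" .
  then have scale: "N powr (d/2) * sqrt (E / K) = sqrt E / N"
    using \<open>N > 0\<close> by (simp add: real_sqrt_divide)
  have "- inner x y \<le> N * norm y"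
    using Cauchy_Schwarz_ineq2[of x y] unfolding N_def by (simp add: abs_le_iff)
  also have "\<dots> \<le> N * sqrt E"
    using real_le_rsqrt[OF assms(5)] \<open>N > 0\<close> by (intro mult_left_mono) auto
  finally have "- inner x y \<le> N * sqrt E" .
  have "- ((2+d) * inner x y / N\<^sup>2 * G) = (2+d) * (- inner x y) / N\<^sup>2 * G" by simp
  also have "\<dots> \<le> (2+d) * (N * sqrt E) / N\<^sup>2 * G"
    using \<open>- inner x y \<le> N * sqrt E\<close> \<open>G \<ge> 0\<close> \<open>d \<ge> 0\<close>
    by (intro mult_right_mono divide_right_mono mult_left_mono) auto
  also have "\<dots> = (2+d) * (N powr (d/2) * sqrt (E / K)) * G"
    unfolding scale using \<open>N > 0\<close> by (simp add: power2_eq_square)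
  finally show ?thesis using forced unfolding N_def[symmetric] K_def[symmetric] G_def[symmetric]
    by (simp add: mult.assoc)
qed

lemma rescaled_energy_estimates:
  fixes u u' :: "real \<Rightarrow> 'a::real_inner" and E Eh Eh' R :: "real \<Rightarrow> real"
  assumes "0 \<le> a" "d \<ge> 0" and nz: "\<forall>t\<in>{a<..<b}. u t \<noteq> 0"
    and du: "\<forall>t\<ge>0. (u has_vector_derivative u' t) (at t within {0..})"
    and dEh: "\<forall>t\<ge>0. (Eh has_real_derivative Eh' t) (at t within {0..})"
    and cont: "continuous_on {0..} u'" "continuous_on {0..} Eh'"
    and equiv: "\<forall>t\<ge>0. E t / 2 \<le> Eh t \<and> Eh t \<le> 2 * E t"
    and kinetic: "\<forall>t\<ge>0. (norm (u' t))\<^sup>2 \<le> E t"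
    and dissip: "\<forall>t\<ge>0. Eh' t \<le> - (\<mu>/2) * Eh t + R t"
  shows "let G = (\<lambda>t. E t / norm (u t) powr (2 + d));
             Gh = (\<lambda>t. Eh t / norm (u t) powr (2 + d))
         in (\<forall>t\<in>{a<..<b}. G t / 2 \<le> Gh t \<and> Gh t \<le> 2 * G t) \<and>
            (\<exists>Gh'. continuous_on {a<..<b} Gh' \<and>
               (\<forall>t\<in>{a<..<b}. (Gh has_real_derivative Gh' t) (at t) \<and>
                  Gh' t \<le> - (\<mu>/2) * Gh t + R t / norm (u t) powr (2 + d)
                          + (2 + d) * norm (u t) powr (d/2) * sqrt (G t) * Gh t))"
proof -
  define K where "K t = norm (u t) powr (2 + d)" for t
  define Gh' where "Gh' t = Eh' t / K t - (2 + d) * inner (u t) (u' t) / (norm (u t))\<^sup>2 * (Eh t / K t)" for t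
  have t0: "t \<ge> 0" if "t \<in> {a<..<b}" for t using \<open>0 \<le> a\<close> that by auto
  have at: "at t within {0..} = at t" if "t \<in> {a<..<b}" for t
    using \<open>0 \<le> a\<close> that by (intro at_within_interior) auto
  have K: "K t > 0" if "t \<in> {a<..<b}" for t using nz that unfolding K_def by simp
  have bounds: "E t / K t / 2 \<le> Eh t / K t \<and> Eh t / K t \<le> 2 * (E t / K t)" if "t \<in> {a<..<b}" for t
  proof -
    have h: "E t / 2 \<le> Eh t" "Eh t \<le> 2 * E t" and K0: "0 \<le> K t"
      using equiv K[OF that] t0[OF that] by auto
    have eqs: "E t / K t / 2 = (E t / 2) / K t" "2 * (E t / K t) = (2 * E t) / K t" by simp_all
    show ?thesis
      unfolding eqs using divide_right_mono[OF h(1) K0] divide_right_mono[OF h(2) K0] by (rule conjI)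
  qed
  have "continuous_on {0..} u"
    using du by (intro continuous_on_vector_derivative[of "{0..}" u u']) simp
  moreover have "continuous_on {0..} Eh"
    using dEh by (intro DERIV_continuous_on[of "{0..}" Eh Eh']) simp
  moreover have "{a<..<b} \<subseteq> {0..}" using \<open>0 \<le> a\<close> by auto
  ultimately have "continuous_on {a<..<b} u" "continuous_on {a<..<b} u'"
    "continuous_on {a<..<b} Eh" "continuous_on {a<..<b} Eh'"
    using cont by (auto intro: continuous_on_subset)
  then have "continuous_on {a<..<b} Gh'"
    using nz unfolding Gh'_def K_def by (intro continuous_intros) auto
  moreover have "((\<lambda>t. Eh t / K t) has_real_derivative Gh' t) (at t)" if "t \<in> {a<..<b}" for t
  proof -
    have "(Eh has_real_derivative Eh' t) (at t)" "(u has_vector_derivative u' t) (at t)"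
      using dEh du t0[OF that] at[OF that] by auto
    then show ?thesis
      unfolding Gh'_def K_def using nz that by (intro has_real_derivative_divide_norm_powr) auto
  qed
  moreover have "Gh' t \<le> - (\<mu>/2) * (Eh t / K t) + R t / K t
      + (2 + d) * norm (u t) powr (d/2) * sqrt (E t / K t) * (Eh t / K t)" if "t \<in> {a<..<b}" for t
  proof -
    have "(norm (u' t))\<^sup>2 \<le> E t" "E t / 2 \<le> Eh t" "Eh' t \<le> - (\<mu>/2) * Eh t + R t"
      using kinetic equiv dissip t0[OF that] by auto
    moreover from this have "0 \<le> Eh t" using zero_le_power2[of "norm (u' t)"] by linarith
    ultimately show ?thesis
      unfolding Gh'_def K_def using nz that \<open>d \<ge> 0\<close> by (intro rescaled_derivative_le) auto
  qed
  ultimately show ?thesis using bounds unfolding K_def Let_def by blast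
qed

lemma modified_energy_estimates:
  assumes weak: "weak_solution DB B \<delta> g u u'" and g_cont: "continuous_on {0..} g"
    and energy: "\<forall>t\<ge>0. ((\<lambda>s. (norm (u' s))\<^sup>2 + (norm (B (u s)))\<^sup>2) has_real_derivative
                  (-4 * \<delta> * (norm (u' t))\<^sup>2 + 2 * inner (u' t) (g t))) (at t within {0..})"
    and Q: "bounded_linear Q" "\<forall>x\<in>DB. Q x \<in> DB \<and> B (Q x) = B x" "\<forall>x. norm (Q x) \<le> norm x"
    and nu_ineq: "\<forall>x\<in>DB. (norm (Q x))\<^sup>2 \<le> (norm (B x))\<^sup>2 / \<nu>"
    and "\<delta> > 0" "\<nu> > 0"
    and \<mu>: "0 < \<mu>" "\<mu> \<le> 1/2" "\<mu> \<le> \<nu>/2" "\<mu> \<le> \<delta>/2" "\<mu> \<le> \<nu> / (5*\<delta>)"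
  defines "E \<equiv> \<lambda>t. (norm (u' t))\<^sup>2 + (norm (B (u t)))\<^sup>2"
    and "Eh \<equiv> \<lambda>t. (norm (u' t))\<^sup>2 + (norm (B (u t)))\<^sup>2 + 2 * \<mu> * inner (u' t) (Q (u t))"
  shows "(\<forall>t\<ge>0. E t / 2 \<le> Eh t \<and> Eh t \<le> 2 * E t) \<and>
     (\<exists>Eh'. continuous_on {0..} Eh' \<and>
        (\<forall>t\<ge>0. (Eh has_real_derivative Eh' t) (at t within {0..}) \<and>
                Eh' t \<le> - (\<mu>/2) * Eh t + (2/\<delta>) * (norm (g t))\<^sup>2))"
proof -
  have u: "\<forall>t\<ge>0. u t \<in> DB" "continuous_on {0..} u" "continuous_on {0..} u'"
    "continuous_on {0..} (\<lambda>t. B (u t))"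
    using weak unfolding weak_solution_def by auto
  define Eh' where "Eh' t = -4 * \<delta> * (norm (u' t))\<^sup>2 + 2 * inner (u' t) (g t) + 2 * \<mu> *
    (inner (u' t) (Q (u' t)) + inner (g t) (Q (u t)) - 2 * \<delta> * inner (u' t) (Q (u t)) - (norm (B (u t)))\<^sup>2)" for t
  have "\<forall>t\<ge>0. E t / 2 \<le> Eh t \<and> Eh t \<le> 2 * E t"
    using modified_energy_equiv[OF \<open>\<nu> > 0\<close> less_imp_le[OF \<mu>(1)] \<mu>(2,3) nu_ineq[rule_format]] u(1)
    unfolding E_def Eh_def by blast
  moreover have "continuous_on {0..} Eh'"
    using u g_cont bounded_linear.continuous_on[OF Q(1)] unfolding Eh'_def
    by (intro continuous_intros) auto
  moreover have "\<forall>t\<ge>0. (Eh has_real_derivative Eh' t) (at t within {0..})"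
    using modified_energy_has_derivative[OF weak _ Q(1,2)] energy unfolding Eh_def Eh'_def by auto
  moreover have "inner v (Q v) \<le> (norm v)\<^sup>2" for v
    using norm_cauchy_schwarz[of v "Q v"] Q(3) mult_left_mono[of "norm (Q v)" "norm v" "norm v"]
    by (simp add: power2_eq_square)
  then have "\<forall>t\<ge>0. Eh' t \<le> - (\<mu>/2) * Eh t + (2/\<delta>) * (norm (g t))\<^sup>2"
    using modified_energy_dissipation[OF \<open>\<delta> > 0\<close> \<open>\<nu> > 0\<close> \<mu>(1,4,5) _ nu_ineq[rule_format]] u(1)
    unfolding Eh_def Eh'_def by blast
  ultimately show ?thesis by blast
qed

theorem lemma4p2:
  fixes DA DB :: "'a::{real_inner,complete_space} set"
    and A B Q :: "'a \<Rightarrow> 'a"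
    and \<delta> \<nu> \<mu> :: real
    and g u u' :: "real \<Rightarrow> 'a"
  assumes separable: "\<exists>C::'a set. countable C \<and> closure C = UNIV"
    and A_sa: "selfadj_nonneg DA A"
    and B_sqrt: "is_sqrt_op DB B DA A"
    and delta_pos: "\<delta> > 0"
    and Q_proj: "is_orth_proj (orthogonal_comp {x \<in> DA. A x = 0}) Q"
    and nu_pos: "\<nu> > 0"
    and nu_ineq: "\<forall>x\<in>DB. (norm (Q x))\<^sup>2 \<le> (norm (B x))\<^sup>2 / \<nu>"
    and mu_def: "\<mu> = min (min (1/2) (\<nu>/2)) (min (\<delta>/2) (\<nu> / (5*\<delta>)))"
    and g_cont: "continuous_on {0..} g"
    and weak: "weak_solution DB B \<delta> g u u'"
    and energy: "\<forall>t\<ge>0. ((\<lambda>s. (norm (u' s))\<^sup>2 + (norm (B (u s)))\<^sup>2) has_real_derivative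
                  (-4 * \<delta> * (norm (u' t))\<^sup>2 + 2 * inner (u' t) (g t))) (at t within {0..})"
  defines "E \<equiv> \<lambda>t. (norm (u' t))\<^sup>2 + (norm (B (u t)))\<^sup>2"
    and "Eh \<equiv> \<lambda>t. (norm (u' t))\<^sup>2 + (norm (B (u t)))\<^sup>2 + 2 * \<mu> * inner (u' t) (Q (u t))"
  shows
    "(\<forall>t\<ge>0. E t / 2 \<le> Eh t \<and> Eh t \<le> 2 * E t) \<and>
     (\<exists>Eh'. continuous_on {0..} Eh' \<and>
        (\<forall>t\<ge>0. (Eh has_real_derivative Eh' t) (at t within {0..}) \<and>
                Eh' t \<le> - (\<mu>/2) * Eh t + (2/\<delta>) * (norm (g t))\<^sup>2)) \<and>
     (\<forall>a b d. 0 \<le> a \<longrightarrow> d \<ge> 0 \<longrightarrow> (\<forall>t\<in>{a<..<b}. u t \<noteq> 0) \<longrightarrow>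
        (let G = (\<lambda>t. E t / norm (u t) powr (2 + d));
             Gh = (\<lambda>t. Eh t / norm (u t) powr (2 + d))
         in (\<forall>t\<in>{a<..<b}. G t / 2 \<le> Gh t \<and> Gh t \<le> 2 * G t) \<and>
            (\<exists>Gh'. continuous_on {a<..<b} Gh' \<and>
               (\<forall>t\<in>{a<..<b}. (Gh has_real_derivative Gh' t) (at t) \<and>
                  Gh' t \<le> - (\<mu>/2) * Gh t + (2/\<delta>) * (norm (g t))\<^sup>2 / norm (u t) powr (2 + d)
                          + (2 + d) * norm (u t) powr (d/2) * sqrt (G t) * Gh t))))"
proof -
  have Q: "bounded_linear Q" "\<forall>x\<in>DB. Q x \<in> DB \<and> B (Q x) = B x" "\<forall>x. norm (Q x) \<le> norm x"
    using bounded_linear_is_orth_proj[OF subspace_orthogonal_comp Q_proj]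
      is_sqrt_op_orth_proj_ker[OF A_sa B_sqrt Q_proj] norm_is_orth_proj_le[OF Q_proj] by auto
  have \<mu>: "0 < \<mu>" "\<mu> \<le> 1/2" "\<mu> \<le> \<nu>/2" "\<mu> \<le> \<delta>/2" "\<mu> \<le> \<nu> / (5*\<delta>)"
    using mu_def nu_pos delta_pos by auto
  have energy_estimates:
    "(\<forall>t\<ge>0. E t / 2 \<le> Eh t \<and> Eh t \<le> 2 * E t) \<and>
     (\<exists>Eh'. continuous_on {0..} Eh' \<and>
        (\<forall>t\<ge>0. (Eh has_real_derivative Eh' t) (at t within {0..}) \<and>
                Eh' t \<le> - (\<mu>/2) * Eh t + (2/\<delta>) * (norm (g t))\<^sup>2))"
    unfolding E_def Eh_def
    by (rule modified_energy_estimates[OF weak g_cont energy Q nu_ineq delta_pos nu_pos \<mu>])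
  then obtain Eh' where Eh': "continuous_on {0..} Eh'"
    "\<forall>t\<ge>0. (Eh has_real_derivative Eh' t) (at t within {0..})"
    "\<forall>t\<ge>0. Eh' t \<le> - (\<mu>/2) * Eh t + (2/\<delta>) * (norm (g t))\<^sup>2"
    by blast
  have u: "\<forall>t\<ge>0. (u has_vector_derivative u' t) (at t within {0..})" "continuous_on {0..} u'"
    using weak unfolding weak_solution_def by auto
  have kinetic: "\<forall>t\<ge>0. (norm (u' t))\<^sup>2 \<le> E t" unfolding E_def by simp
  have "let G = (\<lambda>t. E t / norm (u t) powr (2 + d)); Gh = (\<lambda>t. Eh t / norm (u t) powr (2 + d))
         in (\<forall>t\<in>{a<..<b}. G t / 2 \<le> Gh t \<and> Gh t \<le> 2 * G t) \<and>
            (\<exists>Gh'. continuous_on {a<..<b} Gh' \<and>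
               (\<forall>t\<in>{a<..<b}. (Gh has_real_derivative Gh' t) (at t) \<and>
                  Gh' t \<le> - (\<mu>/2) * Gh t + (2/\<delta>) * (norm (g t))\<^sup>2 / norm (u t) powr (2 + d)
                          + (2 + d) * norm (u t) powr (d/2) * sqrt (G t) * Gh t))"
    if "0 \<le> a" "d \<ge> 0" "\<forall>t\<in>{a<..<b}. u t \<noteq> 0" for a b d
    using that u Eh' energy_estimates kinetic by (intro rescaled_energy_estimates) auto
  with energy_estimates show ?thesis by blast
qed

end
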